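(* There is an algorithm which takes as input a filtered digital image $C$ and outputs a reduction $\rho=(f,g,h):C\Rightarrow EC$ onto a filtered chain complex $EC$ which is compatible with the filtrations ($f$ and $g$ are filtered chain complex morphisms and $h(C^i_n)\subseteq C^i_{n+1}$ for all $n,i$), where $\rho$ is obtained as a composition of several reductions, each of them being the canonical vector-field reduction associated to an admissible discrete vector field (on the current chain complex) which is maximal with respect to the filtration.
   Context: A digital image is a finite algebraic cellular complex $(C_n,d_n,\beta_n)_{n\in\mathbb{Z}}$: a free chain complex of $\mathbb{Z}$-modules with distinguished finite bases $\beta_n$, with $\beta_n=\emptyset$ outside an interval $[0,N]$. It is filtered if it carries a filtration $0=C^0\subseteq C^1\subseteq\cdots\subseteq C^m=C$ by sub-chain complexes, each $C^i_n$ spanned by $\beta_n\cap C^i_n$; a generator has filtration index $i$ if it lies in $C^i_n\setminus C^{i-1}_n$. A reduction $(f,g,h):D\Rightarrow E$ consists of chain morphisms $f:D\to E$, $g:E\to D$ and a degree $+1$ map $h:D\to D$ with $fg=\mathrm{id}_E$, $gf+dh+hd=\mathrm{id}_D$, $fh=0$, $hg=0$, $hh=0$. A discrete vector field (DVF) is a set $V=\{(\sigma_i;\tau_i)\}$ with $\sigma_i\in\beta_n$, $\tau_i\in\beta_{n+1}$, the coefficient of $\sigma_i$ in $d\tau_i$ equal to $\pm1$, each basis element appearing at most once; cells not in $V$ are critical. A $V$-path of degree $n$ is a sequence $\{(\sigma_{i_k};\tau_{i_k})\}_{0\le k<m}$ in $V$ with $\tau_{i_k}$ $n$-cells and, for $0<k<m$,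 $\sigma_{i_k}$ a face of $\tau_{i_{k-1}}$ different from $\sigma_{i_{k-1}}$; $V$ is admissible if the lengths of $V$-paths starting from any given cell are bounded (in the finite case: there are no loops). $V$ is maximal with respect to the filtration if each of its vectors consists of two cells of the same filtration index and no vector $(\sigma;\tau)$ can be added so that $V\cup\{(\sigma;\tau)\}$ is still admissible with both cells of each vector of the same filtration index. Canonical vector-field reduction: splitting $\beta_n$ into target cells (the $\tau_i$), source cells (the $\sigma_i$) and critical cells gives $C_n=C^t_n\oplus C^s_n\oplus C^c_n$ and a block decomposition $(d_{n,a,b})$ of $d_n$ (1=t, 2=s, 3=c); for admissible $V$, $d_{n,2,1}:C^t_n\to C^s_{n-1}$ is invertible, and the reduction $C\Rightarrow C^c$, $C^c_n=\mathbb{Z}[\beta^c_n]$, is given by $d'_n=d_{n,3,3}-d_{n,3,1}d_{n,2,1}^{-1}d_{n,2,3}$, $f_n=[0\;\;-d_{n,3,1}d_{n,2,1}^{-1}\;\;1]$, $g_n=[-d_{n,2,1}^{-1}d_{n,2,3};0;1]$, and $h$ equal to $d_{n+1,2,1}^{-1}$ on $C^s_n$ and zero on $C^t_n\oplus C^c_n$; the critical complex is filtered by $\mathbb{Z}[\beta^c_n\cap C^i_n]$. *)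

theory Defs
  imports Main
begin

text \<open>A free chain complex of Z-modules with distinguished bases is represented by
  its bases (cells n = set of basis elements in degree n) and its incidence
  coefficients: bd n tau sigma is the coefficient of sigma (in degree n-1) in
  the differential of tau (in degree n).  The filtration C^0 <= ... <= C^m is
  given by the sets filt i n = basis elements of C^i_n (each C^i_n is spanned by them).\<close>

record 'a fcx =
  cells :: "int \<Rightarrow> 'a set"
  bd    :: "int \<Rightarrow> 'a \<Rightarrow> 'a \<Rightarrow> int"
  filt  :: "nat \<Rightarrow> int \<Rightarrow> 'a set"
  flen  :: nat

definition delta :: "'a \<Rightarrow> 'a \<Rightarrow> int" where
  "delta a b = (if a = b then 1 else 0)"

definition is_filtered_complex :: "'a fcx \<Rightarrow> bool" where
  "is_filtered_complex C \<longleftrightarrow>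
     (\<forall>n. finite (cells C n)) \<and>
     (\<forall>n n'. n \<noteq> n' \<longrightarrow> cells C n \<inter> cells C n' = {}) \<and>
     (\<forall>n. \<forall>a\<in>cells C n. \<forall>c\<in>cells C (n - 2).
        (\<Sum>b\<in>cells C (n - 1). bd C n a b * bd C (n - 1) b c) = 0) \<and>
     (\<forall>n. filt C 0 n = {}) \<and>
     (\<forall>i n. filt C i n \<subseteq> filt C (Suc i) n) \<and>
     (\<forall>i n. filt C i n \<subseteq> cells C n) \<and>
     (\<forall>n. filt C (flen C) n = cells C n) \<and>
     (\<forall>i n. \<forall>t\<in>filt C i n. \<forall>s\<in>cells C (n - 1).
        bd C n t s \<noteq> 0 \<longrightarrow> s \<in> filt C i (n - 1))"

definition is_filtered_digital_image :: "'a fcx \<Rightarrow> bool" where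
  "is_filtered_digital_image C \<longleftrightarrow> is_filtered_complex C \<and>
     (\<exists>N::int. \<forall>n. (n < 0 \<or> n > N) \<longrightarrow> cells C n = {})"

text \<open>A map M of degree k from A to B is given by M n a b = coefficient of the
  basis element b of B_(n+k) in the image of the basis element a of A_n.\<close>

definition is_chain_map :: "'a fcx \<Rightarrow> 'a fcx \<Rightarrow> (int \<Rightarrow> 'a \<Rightarrow> 'a \<Rightarrow> int) \<Rightarrow> bool" where
  "is_chain_map A B f \<longleftrightarrow>
     (\<forall>n. \<forall>a\<in>cells A n. \<forall>c\<in>cells B (n - 1).
        (\<Sum>b\<in>cells B n. f n a b * bd B n b c) =
        (\<Sum>a'\<in>cells A (n - 1). bd A n a a' * f (n - 1) a' c))"

definition is_reduction :: "'a fcx \<Rightarrow> 'a fcx \<Rightarrow> (int \<Rightarrow> 'a \<Rightarrow> 'a \<Rightarrow> int)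
     \<Rightarrow> (int \<Rightarrow> 'a \<Rightarrow> 'a \<Rightarrow> int) \<Rightarrow> (int \<Rightarrow> 'a \<Rightarrow> 'a \<Rightarrow> int) \<Rightarrow> bool" where
  "is_reduction D E f g h \<longleftrightarrow>
     is_chain_map D E f \<and> is_chain_map E D g \<and>
     \<comment> \<open>f g = id_E\<close>
     (\<forall>n. \<forall>b\<in>cells E n. \<forall>b'\<in>cells E n.
        (\<Sum>a\<in>cells D n. g n b a * f n a b') = delta b b') \<and>
     \<comment> \<open>g f + d h + h d = id_D\<close>
     (\<forall>n. \<forall>a\<in>cells D n. \<forall>a'\<in>cells D n.
        (\<Sum>b\<in>cells E n. f n a b * g n b a')
        + (\<Sum>x\<in>cells D (n + 1). h n a x * bd D (n + 1) x a')
        + (\<Sum>y\<in>cells D (n - 1). bd D n a y * h (n - 1) y a') = delta a a') \<and>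
     \<comment> \<open>f h = 0\<close>
     (\<forall>n. \<forall>a\<in>cells D n. \<forall>b\<in>cells E (n + 1).
        (\<Sum>x\<in>cells D (n + 1). h n a x * f (n + 1) x b) = 0) \<and>
     \<comment> \<open>h g = 0\<close>
     (\<forall>n. \<forall>b\<in>cells E n. \<forall>a\<in>cells D (n + 1).
        (\<Sum>x\<in>cells D n. g n b x * h n x a) = 0) \<and>
     \<comment> \<open>h h = 0\<close>
     (\<forall>n. \<forall>a\<in>cells D n. \<forall>a'\<in>cells D (n + 2).
        (\<Sum>x\<in>cells D (n + 1). h n a x * h (n + 1) x a') = 0)"

definition is_filtered_map :: "'a fcx \<Rightarrow> 'a fcx \<Rightarrow> int \<Rightarrow> (int \<Rightarrow> 'a \<Rightarrow> 'a \<Rightarrow> int) \<Rightarrow> bool" where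
  "is_filtered_map A B k M \<longleftrightarrow>
     (\<forall>i n a b. a \<in> filt A i n \<longrightarrow> b \<in> cells B (n + k) \<longrightarrow> M n a b \<noteq> 0
        \<longrightarrow> b \<in> filt B i (n + k))"

type_synonym 'a red =
  "(int \<Rightarrow> 'a \<Rightarrow> 'a \<Rightarrow> int) \<times> (int \<Rightarrow> 'a \<Rightarrow> 'a \<Rightarrow> int) \<times> (int \<Rightarrow> 'a \<Rightarrow> 'a \<Rightarrow> int)"

definition id_red :: "'a red" where
  "id_red = ((\<lambda>n. delta), (\<lambda>n. delta), (\<lambda>n a b. 0))"

definition comp_red :: "'a fcx \<Rightarrow> 'a red \<Rightarrow> 'a red \<Rightarrow> 'a red" where
  "comp_red B r1 r2 = (case r1 of (f1, g1, h1) \<Rightarrow> case r2 of (f2, g2, h2) \<Rightarrow>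
     ((\<lambda>n a e. \<Sum>b\<in>cells B n. f1 n a b * f2 n b e),
      (\<lambda>n e a. \<Sum>b\<in>cells B n. g2 n e b * g1 n b a),
      (\<lambda>n a a'. h1 n a a' +
         (\<Sum>b\<in>cells B n. \<Sum>b'\<in>cells B (n + 1). f1 n a b * h2 n b b' * g1 (n + 1) b' a'))))"

definition is_dvf :: "'a fcx \<Rightarrow> ('a \<times> 'a) set \<Rightarrow> bool" where
  "is_dvf C V \<longleftrightarrow>
     (\<forall>(s, t)\<in>V. \<exists>n. s \<in> cells C n \<and> t \<in> cells C (n + 1) \<and> bd C (n + 1) t s \<in> {1, -1}) \<and>
     (\<forall>(s, t)\<in>V. \<forall>(s', t')\<in>V. (s = s' \<longleftrightarrow> t = t') \<and> s \<noteq> t')"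

definition is_vpath :: "'a fcx \<Rightarrow> ('a \<times> 'a) set \<Rightarrow> int \<Rightarrow> ('a \<times> 'a) list \<Rightarrow> bool" where
  "is_vpath C V n p \<longleftrightarrow> set p \<subseteq> V \<and>
     (\<forall>k < length p. snd (p ! k) \<in> cells C n) \<and>
     (\<forall>k. 0 < k \<and> k < length p \<longrightarrow>
        bd C n (snd (p ! (k - 1))) (fst (p ! k)) \<noteq> 0 \<and> fst (p ! k) \<noteq> fst (p ! (k - 1)))"

definition is_admissible :: "'a fcx \<Rightarrow> ('a \<times> 'a) set \<Rightarrow> bool" where
  "is_admissible C V \<longleftrightarrow>
     (\<forall>x. \<exists>B::nat. \<forall>n p. is_vpath C V n p \<and> p \<noteq> [] \<and> fst (hd p) = x \<longrightarrow> length p \<le> B)"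

definition fidx :: "'a fcx \<Rightarrow> 'a \<Rightarrow> nat" where
  "fidx C x = (LEAST i. \<exists>n. x \<in> filt C i n)"

definition is_filt_dvf :: "'a fcx \<Rightarrow> ('a \<times> 'a) set \<Rightarrow> bool" where
  "is_filt_dvf C V \<longleftrightarrow> is_dvf C V \<and> (\<forall>(s, t)\<in>V. fidx C s = fidx C t)"

definition is_maximal_filt_dvf :: "'a fcx \<Rightarrow> ('a \<times> 'a) set \<Rightarrow> bool" where
  "is_maximal_filt_dvf C V \<longleftrightarrow> is_filt_dvf C V \<and> is_admissible C V \<and>
     \<not> (\<exists>s t. (s, t) \<notin> V \<and> is_filt_dvf C (insert (s, t) V) \<and> is_admissible C (insert (s, t) V))"

definition tgt :: "'a fcx \<Rightarrow> ('a \<times> 'a) set \<Rightarrow> int \<Rightarrow> 'a set" where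
  "tgt C V n = {t \<in> cells C n. \<exists>s. (s, t) \<in> V}"

definition src :: "'a fcx \<Rightarrow> ('a \<times> 'a) set \<Rightarrow> int \<Rightarrow> 'a set" where
  "src C V n = {s \<in> cells C n. \<exists>t. (s, t) \<in> V}"

definition crit :: "'a fcx \<Rightarrow> ('a \<times> 'a) set \<Rightarrow> int \<Rightarrow> 'a set" where
  "crit C V n = cells C n - tgt C V n - src C V n"

text \<open>inv21 C V n s t: coefficient of the target cell t (degree n) in the image of
  the source cell s (degree n-1) under the inverse of d_(n,2,1): C^t_n -> C^s_(n-1).\<close>
definition inv21 :: "'a fcx \<Rightarrow> ('a \<times> 'a) set \<Rightarrow> int \<Rightarrow> 'a \<Rightarrow> 'a \<Rightarrow> int" where
  "inv21 C V n = (THE M.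
     (\<forall>s t. M s t \<noteq> 0 \<longrightarrow> s \<in> src C V (n - 1) \<and> t \<in> tgt C V n) \<and>
     (\<forall>t\<in>tgt C V n. \<forall>t'\<in>tgt C V n.
        (\<Sum>s\<in>src C V (n - 1). bd C n t s * M s t') = delta t t') \<and>
     (\<forall>s\<in>src C V (n - 1). \<forall>s'\<in>src C V (n - 1).
        (\<Sum>t\<in>tgt C V n. M s t * bd C n t s') = delta s s'))"

text \<open>The critical complex, with d' = d33 - d31 d21^-1 d23 and the induced filtration.\<close>
definition crit_complex :: "'a fcx \<Rightarrow> ('a \<times> 'a) set \<Rightarrow> 'a fcx" where
  "crit_complex C V = \<lparr> cells = crit C V,
     bd = (\<lambda>n c c'. bd C n c c' -
        (\<Sum>s\<in>src C V (n - 1). \<Sum>t\<in>tgt C V n. bd C n c s * inv21 C V n s t * bd C n t c')),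
     filt = (\<lambda>i n. filt C i n \<inter> crit C V n),
     flen = flen C \<rparr>"

text \<open>The canonical reduction C => C^c: f = [0, -d31 d21^-1, 1], g = [-d21^-1 d23; 0; 1],
  h = d21^-1 on source cells and 0 elsewhere.\<close>
definition vf_red :: "'a fcx \<Rightarrow> ('a \<times> 'a) set \<Rightarrow> 'a red" where
  "vf_red C V =
     ((\<lambda>n a c. if a \<in> tgt C V n then 0
               else if a \<in> src C V n then
                 - (\<Sum>t\<in>tgt C V (n + 1). inv21 C V (n + 1) a t * bd C (n + 1) t c)
               else delta a c),
      (\<lambda>n c b. if b \<in> tgt C V n then
                 - (\<Sum>s\<in>src C V (n - 1). bd C n c s * inv21 C V n s b)
               else if b \<in> src C V n then 0
               else delta c b),
      (\<lambda>n a b. if a \<in> src C V n then inv21 C V (n + 1) a b else 0))"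

fun valid_seq :: "'a fcx \<Rightarrow> ('a \<times> 'a) set list \<Rightarrow> bool" where
  "valid_seq C [] = True"
| "valid_seq C (V # Vs) \<longleftrightarrow> is_admissible C V \<and> is_maximal_filt_dvf C V \<and>
     valid_seq (crit_complex C V) Vs"

fun iter_red :: "'a fcx \<Rightarrow> ('a \<times> 'a) set list \<Rightarrow> 'a fcx \<times> 'a red" where
  "iter_red C [] = (C, id_red)"
| "iter_red C (V # Vs) =
     (let D = crit_complex C V; (E, r) = iter_red D Vs in (E, comp_red D (vf_red C V) r))"

end

theory Submission
  imports Defs "HOL-Library.Function_Algebras"
begin

text \<open>One canonical reduction already suffices: among the finitely many admissible vector fields
  whose vectors join cells of equal filtration index, one that is maximal for inclusion is maximal
  in the required sense. For an admissible V the block d21 is unitriangular along a well-founded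
  order on source cells, so its inverse can be built by well-founded recursion; extended by zero it
  gives a matrix h on all cells. With \<open>\<pi>\<^sub>K\<close> the projection onto the critical cells, the reduction
  is \<open>f = (1 - h d) \<pi>\<^sub>K\<close>, \<open>g = \<pi>\<^sub>K (1 - d h)\<close>, \<open>d' = \<pi>\<^sub>K d (1 - h d) \<pi>\<^sub>K\<close>, and every reduction identity
  follows by matrix algebra from \<open>d d = 0\<close>, \<open>h h = 0\<close>, \<open>d h = 1\<close> on target cells and \<open>h d = 1\<close> on
  source cells. Because each vector joins cells of the same filtration index, the recursion shows
  that h, and with it f, g and d', never raises the filtration index.\<close>

lemma sum_delta_left: "finite A \<Longrightarrow> (\<Sum>y\<in>A. delta x y * f y) = (if x \<in> A then f x else 0)"
  unfolding delta_def by (simp add: if_distrib[where f="\<lambda>c. c * _"] cong: if_cong)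

lemma sum_delta_right: "finite A \<Longrightarrow> (\<Sum>y\<in>A. f y * delta y x) = (if x \<in> A then f x else 0)"
  unfolding delta_def by (simp add: if_distrib[where f="\<lambda>c. _ * c"] cong: if_cong)

lemma comp_red_id_red:
  assumes "\<And>n. finite (cells E n)"
  shows "comp_red E (f, g, h) id_red =
    ((\<lambda>n a e. if e \<in> cells E n then f n a e else 0), (\<lambda>n e a. if e \<in> cells E n then g n e a else 0), h)"
  unfolding comp_red_def id_red_def using assms by (simp add: sum_delta_left sum_delta_right)

lemma is_reduction_restrict:
  assumes "is_reduction D E f g h"
  shows "is_reduction D E (\<lambda>n a e. if e \<in> cells E n then f n a e else 0)
    (\<lambda>n e a. if e \<in> cells E n then g n e a else 0) h"
  using assms unfolding is_reduction_def is_chain_map_def by (simp cong: sum.cong)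

lemma is_filtered_map_smaller_support:
  assumes "is_filtered_map A B k M" and "\<And>n a b. M' n a b \<noteq> 0 \<Longrightarrow> M n a b \<noteq> 0"
  shows "is_filtered_map A B k M'"
  using assms unfolding is_filtered_map_def by blast

section \<open>Integer matrices indexed by a finite set\<close>

text \<open>As in the definitions, \<open>A x y\<close> is the coefficient of y in the image of x, so
  \<open>mat_mult X A B\<close> is A followed by B.\<close>

type_synonym 'a matrix = "'a \<Rightarrow> 'a \<Rightarrow> int"

definition mat_mult :: "'a set \<Rightarrow> 'a matrix \<Rightarrow> 'a matrix \<Rightarrow> 'a matrix" where
  "mat_mult X A B = (\<lambda>x z. \<Sum>y\<in>X. A x y * B y z)"

definition diag_on :: "'a set \<Rightarrow> 'a matrix" where
  "diag_on P = (\<lambda>x y. if x = y \<and> x \<in> P then 1 else 0)"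

definition supported_on :: "'a set \<Rightarrow> 'a matrix \<Rightarrow> bool" where
  "supported_on X A \<longleftrightarrow> (\<forall>x y. A x y \<noteq> 0 \<longrightarrow> x \<in> X \<and> y \<in> X)"

lemma mat_mult_assoc: "mat_mult X (mat_mult X A B) E = mat_mult X A (mat_mult X B E)"
proof (intro ext)
  fix x z
  have "(\<Sum>y\<in>X. (\<Sum>w\<in>X. A x w * B w y) * E y z) = (\<Sum>y\<in>X. \<Sum>w\<in>X. A x w * B w y * E y z)"
    by (simp add: sum_distrib_right)
  also have "\<dots> = (\<Sum>w\<in>X. \<Sum>y\<in>X. A x w * B w y * E y z)" by (rule sum.swap)
  also have "\<dots> = (\<Sum>w\<in>X. A x w * (\<Sum>y\<in>X. B w y * E y z))"
    by (simp add: sum_distrib_left mult.assoc)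
  finally show "mat_mult X (mat_mult X A B) E x z = mat_mult X A (mat_mult X B E) x z"
    unfolding mat_mult_def .
qed

lemma mat_mult_add_left: "mat_mult X (A + B) E = mat_mult X A E + mat_mult X B E"
  and mat_mult_add_right: "mat_mult X E (A + B) = mat_mult X E A + mat_mult X E B"
  and mat_mult_diff_left: "mat_mult X (A - B) E = mat_mult X A E - mat_mult X B E"
  and mat_mult_diff_right: "mat_mult X E (A - B) = mat_mult X E A - mat_mult X E B"
  and mat_mult_zero_left: "mat_mult X 0 E = 0"
  and mat_mult_zero_right: "mat_mult X E 0 = 0"
  unfolding mat_mult_def
  by (simp_all add: fun_eq_iff algebra_simps sum.distrib sum_subtractf)

lemmas mat_mult_distrib =
  mat_mult_add_left mat_mult_add_right mat_mult_diff_left mat_mult_diff_right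
  mat_mult_zero_left mat_mult_zero_right

lemma mat_mult_diag_left:
  assumes "finite X" "P \<subseteq> X"
  shows "mat_mult X (diag_on P) B = (\<lambda>x z. if x \<in> P then B x z else 0)"
proof (intro ext)
  fix x z
  have "mat_mult X (diag_on P) B x z = (\<Sum>y\<in>X. if y = x then (if x \<in> P then B x z else 0) else 0)"
    unfolding mat_mult_def diag_on_def by (rule sum.cong) auto
  then show "mat_mult X (diag_on P) B x z = (if x \<in> P then B x z else 0)"
    using assms by auto
qed

lemma mat_mult_diag_right:
  assumes "finite X" "P \<subseteq> X"
  shows "mat_mult X A (diag_on P) = (\<lambda>x z. if z \<in> P then A x z else 0)"
proof (intro ext)
  fix x z
  have "mat_mult X A (diag_on P) x z = (\<Sum>y\<in>X. if y = z then (if z \<in> P then A x z else 0) else 0)"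
    unfolding mat_mult_def diag_on_def by (rule sum.cong) auto
  then show "mat_mult X A (diag_on P) x z = (if z \<in> P then A x z else 0)"
    using assms by auto
qed

lemma mat_mult_nonzero:
  assumes "mat_mult X A B x z \<noteq> 0"
  obtains y where "y \<in> X" "A x y \<noteq> 0" "B y z \<noteq> 0"
proof -
  obtain y where "y \<in> X" "A x y * B y z \<noteq> 0"
    using assms unfolding mat_mult_def by (meson sum.neutral)
  with that show ?thesis by simp
qed

lemma mat_mult_eq_sum:
  assumes "finite X" "Y \<subseteq> X" "\<And>y. y \<in> X \<Longrightarrow> A x y * B y z \<noteq> 0 \<Longrightarrow> y \<in> Y"
    "\<And>y. y \<in> Y \<Longrightarrow> A x y = a y" "\<And>y. y \<in> Y \<Longrightarrow> B y z = b y"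
  shows "mat_mult X A B x z = (\<Sum>y\<in>Y. a y * b y)"
proof -
  have "mat_mult X A B x z = (\<Sum>y\<in>Y. A x y * B y z)"
    unfolding mat_mult_def by (rule sum.mono_neutral_right) (use assms in auto)
  also have "\<dots> = (\<Sum>y\<in>Y. a y * b y)" by (rule sum.cong) (use assms in auto)
  finally show ?thesis .
qed

lemma supported_on_mat_mult:
  "supported_on X A \<Longrightarrow> supported_on X B \<Longrightarrow> supported_on X (mat_mult X A B)"
  unfolding supported_on_def by (meson mat_mult_nonzero)

lemma supported_on_diff: "supported_on X A \<Longrightarrow> supported_on X B \<Longrightarrow> supported_on X (A - B)"
  unfolding supported_on_def by (metis diff_self minus_apply)

lemma supported_on_diag: "P \<subseteq> X \<Longrightarrow> supported_on X (diag_on P)"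
  unfolding supported_on_def diag_on_def by (auto split: if_splits)

lemma mat_mult_id_left: "finite X \<Longrightarrow> supported_on X B \<Longrightarrow> mat_mult X (diag_on X) B = B"
  by (auto simp: mat_mult_diag_left fun_eq_iff supported_on_def)

lemma mat_mult_id_right: "finite X \<Longrightarrow> supported_on X A \<Longrightarrow> mat_mult X A (diag_on X) = A"
  by (auto simp: mat_mult_diag_right fun_eq_iff supported_on_def)

lemma mat_mult_diag_idem: "finite X \<Longrightarrow> P \<subseteq> X \<Longrightarrow> mat_mult X (diag_on P) (diag_on P) = diag_on P"
  using mat_mult_diag_left[of X P "diag_on P"] by (auto simp: diag_on_def fun_eq_iff)

text \<open>Abstract form of the canonical reduction: d is the differential, h the inverse of d21
  extended by zero, and T, S, K are the target, source and critical cells.\<close>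

locale contraction_data =
  fixes X :: "'a set" and d h :: "'a matrix" and T S K :: "'a set"
  assumes finite: "finite X"
    and d_supported: "supported_on X d" and h_supported: "supported_on X h"
    and T_S_disjoint: "T \<inter> S = {}" and T_S_subset: "T \<union> S \<subseteq> X" and K_def: "K = X - T - S"
    and dd: "mat_mult X d d = 0" and hh: "mat_mult X h h = 0"
    and dh_on_T: "mat_mult X (diag_on T) (mat_mult X d h) = diag_on T"
    and hd_on_S: "mat_mult X (mat_mult X h d) (diag_on S) = diag_on S"
    and h_K: "mat_mult X h (diag_on K) = 0" and K_h: "mat_mult X (diag_on K) h = 0"
begin

abbreviation mult (infixl "\<odot>" 70) where "A \<odot> B \<equiv> mat_mult X A B"
abbreviation one ("\<one>") where "\<one> \<equiv> diag_on X"
abbreviation pi_K where "pi_K \<equiv> diag_on K"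

definition f where "f = (\<one> - h \<odot> d) \<odot> pi_K"
definition g where "g = pi_K \<odot> (\<one> - d \<odot> h)"
definition d' where "d' = pi_K \<odot> d \<odot> (\<one> - h \<odot> d) \<odot> pi_K"

lemma K_subset: "K \<subseteq> X" and S_subset: "S \<subseteq> X" and T_subset: "T \<subseteq> X"
  using K_def T_S_subset by blast+

lemma diag_partition: "diag_on T + diag_on S + pi_K = \<one>"
  using T_S_disjoint T_S_subset unfolding K_def diag_on_def by (auto simp: fun_eq_iff)

lemmas supported = supported_on_mat_mult supported_on_diff supported_on_diag
  d_supported h_supported K_subset S_subset T_subset

lemma one_left: "supported_on X B \<Longrightarrow> \<one> \<odot> B = B"
  using finite by (rule mat_mult_id_left)

lemma one_right: "supported_on X A \<Longrightarrow> A \<odot> \<one> = A"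
  using finite by (rule mat_mult_id_right)

lemma pi_K_idem: "pi_K \<odot> pi_K = pi_K"
  using finite K_subset by (rule mat_mult_diag_idem)

lemma dd': "d \<odot> (d \<odot> A) = 0" and hh': "h \<odot> (h \<odot> A) = 0" and K_h': "pi_K \<odot> (h \<odot> A) = 0"
  and pi_K_idem': "pi_K \<odot> (pi_K \<odot> A) = pi_K \<odot> A"
  by (simp_all add: mat_mult_assoc[symmetric] dd hh K_h pi_K_idem mat_mult_distrib)

lemmas mult_simps = mat_mult_distrib mat_mult_assoc one_left one_right supported
  dd' hh' K_h' pi_K_idem' h_K K_h pi_K_idem hh dd

text \<open>Inserting \<open>1 = \<pi>\<^sub>T + \<pi>\<^sub>S + \<pi>\<^sub>K\<close> into \<open>(1 - h d) (1 - d h)\<close> leaves only the critical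
  term, because \<open>1 - h d\<close> kills source cells and \<open>1 - d h\<close> kills target cells.\<close>

lemma sandwich: "(\<one> - h \<odot> d) \<odot> pi_K \<odot> (\<one> - d \<odot> h) = \<one> - h \<odot> d - d \<odot> h"
proof -
  let ?E1 = "\<one> - h \<odot> d" and ?E2 = "\<one> - d \<odot> h"
  have kill_S: "?E1 \<odot> diag_on S = 0"
    using hd_on_S by (simp add: mult_simps)
  have kill_T: "diag_on T \<odot> ?E2 = 0"
    using dh_on_T by (simp add: mult_simps)
  have "?E1 \<odot> ?E2 = ?E1 \<odot> (diag_on T + diag_on S + pi_K) \<odot> ?E2"
    by (simp only: diag_partition) (simp add: one_right supported)
  also have "\<dots> = ?E1 \<odot> diag_on T \<odot> ?E2 + ?E1 \<odot> diag_on S \<odot> ?E2 + ?E1 \<odot> pi_K \<odot> ?E2"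
    by (simp only: mat_mult_add_left mat_mult_add_right)
  also have "\<dots> = ?E1 \<odot> pi_K \<odot> ?E2"
    by (simp only: kill_S mat_mult_assoc kill_T mat_mult_zero_left mat_mult_zero_right add_0)
  finally show ?thesis by (simp add: mult_simps)
qed

lemma f_apply: "f x z = (if z \<in> K then (\<one> - h \<odot> d) x z else 0)"
  unfolding f_def mat_mult_diag_right[OF finite K_subset] ..

lemma g_apply: "g x z = (if x \<in> K then (\<one> - d \<odot> h) x z else 0)"
  unfolding g_def mat_mult_diag_left[OF finite K_subset] ..

lemma d'_apply: "d' x z = (if x \<in> K \<and> z \<in> K then (d - d \<odot> (h \<odot> d)) x z else 0)"
proof -
  have "d' = pi_K \<odot> (d - d \<odot> (h \<odot> d)) \<odot> pi_K"
    unfolding d'_def by (simp add: mult_simps)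
  then show ?thesis
    by (simp add: mat_mult_diag_left[OF finite K_subset] mat_mult_diag_right[OF finite K_subset])
qed

lemma gf: "g \<odot> f = pi_K"
  unfolding f_def g_def by (simp add: mult_simps)

lemma fg_homotopy: "f \<odot> g + h \<odot> d + d \<odot> h = \<one>"
  using sandwich unfolding f_def g_def by (simp add: mat_mult_assoc pi_K_idem')

lemma hf: "h \<odot> f = 0"
  unfolding f_def by (simp add: mult_simps)

lemma gh: "g \<odot> h = 0"
  unfolding g_def by (simp add: mult_simps)

lemma d'_alt: "d' = pi_K \<odot> (\<one> - d \<odot> h) \<odot> d \<odot> pi_K"
proof -
  have "d \<odot> (\<one> - h \<odot> d) = (\<one> - d \<odot> h) \<odot> d" by (simp add: mult_simps)
  then show ?thesis unfolding d'_def by (simp add: mat_mult_assoc)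
qed

lemma f_d': "f \<odot> d' = d \<odot> f"
proof -
  have "f \<odot> d' = ((\<one> - h \<odot> d) \<odot> pi_K \<odot> (\<one> - d \<odot> h)) \<odot> d \<odot> pi_K"
    unfolding f_def d'_alt by (simp add: mat_mult_assoc pi_K_idem')
  then show ?thesis unfolding sandwich f_def by (simp add: mult_simps)
qed

lemma d'_g: "d' \<odot> g = g \<odot> d"
proof -
  have "d' \<odot> g = pi_K \<odot> d \<odot> ((\<one> - h \<odot> d) \<odot> pi_K \<odot> (\<one> - d \<odot> h))"
    unfolding g_def d'_def by (simp add: mat_mult_assoc pi_K_idem')
  then show ?thesis unfolding sandwich g_def by (simp add: mult_simps)
qed

lemma d'd': "d' \<odot> d' = 0"
proof -
  have "d' \<odot> d' = pi_K \<odot> d \<odot> ((\<one> - h \<odot> d) \<odot> pi_K \<odot> (\<one> - d \<odot> h)) \<odot> d \<odot> pi_K"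
    by (subst (1) d'_def, subst d'_alt) (simp add: mat_mult_assoc pi_K_idem')
  then show ?thesis unfolding sandwich by (simp add: mult_simps)
qed

end

section \<open>Admissible discrete vector fields on finite complexes\<close>

locale finite_dvf_complex =
  fixes C :: "'a fcx" and V :: "('a \<times> 'a) set"
  assumes complex: "is_filtered_complex C"
    and finite_Cells: "finite (\<Union>n. cells C n)"
    and dvf: "is_dvf C V"
    and admissible: "is_admissible C V"
begin

lemma cells_finite: "finite (cells C n)"
  using complex by (simp add: is_filtered_complex_def)

lemma cells_disjoint: "x \<in> cells C n \<Longrightarrow> x \<in> cells C m \<Longrightarrow> n = m"
  using complex unfolding is_filtered_complex_def by blast

lemma bd_bd: "a \<in> cells C n \<Longrightarrow> c \<in> cells C (n - 2) \<Longrightarrow>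
    (\<Sum>b\<in>cells C (n - 1). bd C n a b * bd C (n - 1) b c) = 0"
  using complex unfolding is_filtered_complex_def by blast

lemma vector_cells: "(s, t) \<in> V \<Longrightarrow>
    \<exists>n. s \<in> cells C n \<and> t \<in> cells C (n + 1) \<and> bd C (n + 1) t s \<in> {1, -1}"
  using dvf unfolding is_dvf_def by blast

lemma vector_unique_tgt: "(s, t) \<in> V \<Longrightarrow> (s, t') \<in> V \<Longrightarrow> t = t'"
  and vector_src_not_tgt: "(s, t) \<in> V \<Longrightarrow> (s', t') \<in> V \<Longrightarrow> s \<noteq> t'"
  using dvf unfolding is_dvf_def by blast+

definition target_of :: "'a \<Rightarrow> 'a" where
  "target_of s = (THE t. (s, t) \<in> V)"

lemma target_of_eq: "(s, t) \<in> V \<Longrightarrow> target_of s = t"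
  unfolding target_of_def using vector_unique_tgt by blast

lemma src_vector:
  assumes "s \<in> src C V (n - 1)"
  shows "(s, target_of s) \<in> V" "target_of s \<in> tgt C V n" "bd C n (target_of s) s \<in> {1, -1}"
proof -
  obtain t where st: "(s, t) \<in> V" and s: "s \<in> cells C (n - 1)"
    using assms unfolding src_def by blast
  then obtain m where m: "s \<in> cells C m" "t \<in> cells C (m + 1)" "bd C (m + 1) t s \<in> {1, -1}"
    using vector_cells by blast
  have "m + 1 = n" using cells_disjoint[OF s m(1)] by simp
  then show "(s, target_of s) \<in> V" "target_of s \<in> tgt C V n" "bd C n (target_of s) s \<in> {1, -1}"
    using st m target_of_eq[OF st] unfolding tgt_def by auto
qed

lemma tgt_vector:
  assumes "t \<in> tgt C V n"
  obtains s where "s \<in> src C V (n - 1)" "target_of s = t"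
proof -
  obtain s where st: "(s, t) \<in> V" and t: "t \<in> cells C n"
    using assms unfolding tgt_def by blast
  then obtain m where m: "s \<in> cells C m" "t \<in> cells C (m + 1)"
    using vector_cells by blast
  have "m = n - 1" using cells_disjoint[OF t m(2)] by simp
  then show ?thesis using that st m target_of_eq[OF st] unfolding src_def by auto
qed

lemma src_finite: "finite (src C V n)" and tgt_finite: "finite (tgt C V n)"
  unfolding src_def tgt_def using cells_finite by simp_all

lemma src_tgt_disjoint: "x \<in> src C V n \<Longrightarrow> x \<notin> tgt C V m"
  unfolding src_def tgt_def using vector_src_not_tgt by blast

subsection \<open>Inverting the block d21\<close>

text \<open>\<open>(s', s) \<in> src_face n\<close> means that \<open>(s; target_of s), (s'; target_of s')\<close> is a V-path,
  so admissibility makes this relation well-founded; d21 is unitriangular with respect to it.\<close>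

definition src_face :: "int \<Rightarrow> ('a \<times> 'a) set" where
  "src_face n = {(s', s). s \<in> src C V (n - 1) \<and> s' \<in> src C V (n - 1) \<and> s' \<noteq> s \<and>
     bd C n (target_of s) s' \<noteq> 0}"

lemma wf_src_face: "wf (src_face n)"
  unfolding wf_iff_no_infinite_down_chain
proof
  assume "\<exists>f. \<forall>i. (f (Suc i), f i) \<in> src_face n"
  then obtain f where f: "\<And>i. (f (Suc i), f i) \<in> src_face n" by blast
  have f_src: "f i \<in> src C V (n - 1)" for i using f[of i] unfolding src_face_def by auto
  obtain B where B: "\<And>m p. is_vpath C V m p \<and> p \<noteq> [] \<and> fst (hd p) = f 0 \<longrightarrow> length p \<le> B"
    using admissible unfolding is_admissible_def by blast
  define p where "p = map (\<lambda>i. (f i, target_of (f i))) [0..<Suc B]"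
  have "is_vpath C V n p"
    unfolding is_vpath_def
  proof (intro conjI)
    show "set p \<subseteq> V" unfolding p_def using f_src src_vector(1) by auto
    show "\<forall>k<length p. snd (p ! k) \<in> cells C n"
      unfolding p_def using f_src src_vector(2) unfolding tgt_def by (auto simp del: upt_Suc)
    show "\<forall>k. 0 < k \<and> k < length p \<longrightarrow>
        bd C n (snd (p ! (k - 1))) (fst (p ! k)) \<noteq> 0 \<and> fst (p ! k) \<noteq> fst (p ! (k - 1))"
    proof (intro allI impI)
      fix k assume k: "0 < k \<and> k < length p"
      then obtain j where j: "k = Suc j" by (cases k) auto
      have "p ! k = (f k, target_of (f k))" "p ! (k - 1) = (f j, target_of (f j))"
        using k j unfolding p_def by (auto simp del: upt_Suc)
      then show "bd C n (snd (p ! (k - 1))) (fst (p ! k)) \<noteq> 0 \<and> fst (p ! k) \<noteq> fst (p ! (k - 1))"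
        using f[of j] j unfolding src_face_def by auto
    qed
  qed
  moreover have "p \<noteq> []" "fst (hd p) = f 0"
    unfolding p_def by (auto simp del: upt_Suc simp: hd_map)
  ultimately have "length p \<le> B" using B by blast
  then show False unfolding p_def by simp
qed

lemma d21_kernel_trivial:
  assumes "\<And>t. t \<in> tgt C V n \<Longrightarrow> (\<Sum>s\<in>src C V (n - 1). bd C n t s * x s) = 0"
  shows "s \<in> src C V (n - 1) \<Longrightarrow> x s = 0"
proof (induction s rule: wf_induct[OF wf_src_face[of n]])
  case (1 s)
  let ?S = "src C V (n - 1)" and ?t = "target_of s"
  have "0 = (\<Sum>s'\<in>?S. bd C n ?t s' * x s')"
    using assms src_vector(2)[OF 1(2)] by simp
  also have "\<dots> = bd C n ?t s * x s + (\<Sum>s'\<in>?S - {s}. bd C n ?t s' * x s')"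
    using 1(2) src_finite by (simp add: sum.remove)
  also have "(\<Sum>s'\<in>?S - {s}. bd C n ?t s' * x s') = 0"
    using 1 unfolding src_face_def by (intro sum.neutral) auto
  finally have "bd C n ?t s * x s = 0" by simp
  then show ?case using src_vector(3)[OF 1(2)] by auto
qed

text \<open>The inverse is computed by recursion along \<open>src_face\<close>, solving the row of
  \<open>target_of s\<close> for the entry at s; the pivot is a unit \<open>\<epsilon> = \<plusminus>1\<close>, so \<open>\<epsilon>\<inverse> = \<epsilon>\<close>.\<close>

definition inv21_rec :: "int \<Rightarrow> 'a \<Rightarrow> 'a \<Rightarrow> int" where
  "inv21_rec n = wfrec (src_face n) (\<lambda>J s t. bd C n (target_of s) s *
      (delta (target_of s) t - (\<Sum>s'\<in>src C V (n - 1) - {s}. bd C n (target_of s) s' * J s' t)))"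

lemma inv21_rec_eq:
  assumes s: "s \<in> src C V (n - 1)"
  shows "inv21_rec n s t = bd C n (target_of s) s *
      (delta (target_of s) t - (\<Sum>s'\<in>src C V (n - 1) - {s}. bd C n (target_of s) s' * inv21_rec n s' t))"
proof -
  have "(\<Sum>s'\<in>src C V (n - 1) - {s}. bd C n (target_of s) s' * cut (inv21_rec n) (src_face n) s s' t) =
        (\<Sum>s'\<in>src C V (n - 1) - {s}. bd C n (target_of s) s' * inv21_rec n s' t)"
    using s unfolding src_face_def by (intro sum.cong) (auto simp: cut_def)
  then show ?thesis
    unfolding inv21_rec_def by (subst wfrec[OF wf_src_face]) simp
qed

definition d21_inv :: "int \<Rightarrow> 'a \<Rightarrow> 'a \<Rightarrow> int" where
  "d21_inv n s t = (if s \<in> src C V (n - 1) \<and> t \<in> tgt C V n then inv21_rec n s t else 0)"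

lemma d21_inv_right:
  assumes t: "t \<in> tgt C V n" and t': "t' \<in> tgt C V n"
  shows "(\<Sum>s\<in>src C V (n - 1). bd C n t s * d21_inv n s t') = delta t t'"
proof -
  let ?S = "src C V (n - 1)"
  obtain s0 where s0: "s0 \<in> ?S" "target_of s0 = t" using tgt_vector[OF t] .
  have unit: "bd C n t s0 * bd C n t s0 = 1" using src_vector(3)[OF s0(1)] s0(2) by auto
  have "(\<Sum>s\<in>?S. bd C n t s * d21_inv n s t') = (\<Sum>s\<in>?S. bd C n t s * inv21_rec n s t')"
    unfolding d21_inv_def using t' by simp
  also have "\<dots> = bd C n t s0 * inv21_rec n s0 t' + (\<Sum>s\<in>?S - {s0}. bd C n t s * inv21_rec n s t')"
    using s0(1) src_finite by (simp add: sum.remove)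
  also have "\<dots> = delta t t'"
    unfolding inv21_rec_eq[OF s0(1)] s0(2) using unit by (simp add: algebra_simps)
  finally show ?thesis .
qed

lemma d21_inv_left:
  assumes s: "s \<in> src C V (n - 1)" and s': "s' \<in> src C V (n - 1)"
  shows "(\<Sum>t\<in>tgt C V n. d21_inv n s t * bd C n t s') = delta s s'"
proof -
  let ?S = "src C V (n - 1)" and ?T = "tgt C V n"
  define x where "x s = (\<Sum>t\<in>?T. d21_inv n s t * bd C n t s') - delta s s'" for s
  have "x s = 0"
  proof (rule d21_kernel_trivial[OF _ s])
    fix t assume t: "t \<in> ?T"
    have "(\<Sum>s\<in>?S. bd C n t s * x s) =
        (\<Sum>t'\<in>?T. (\<Sum>s\<in>?S. bd C n t s * d21_inv n s t') * bd C n t' s') -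
        (\<Sum>s\<in>?S. bd C n t s * delta s s')"
      unfolding x_def
      by (simp add: algebra_simps sum_distrib_left sum_distrib_right sum_subtractf sum.swap[of _ ?T])
    also have "\<dots> = 0"
      using t s' d21_inv_right by (simp add: tgt_finite src_finite sum_delta_left sum_delta_right)
    finally show "(\<Sum>s\<in>?S. bd C n t s * x s) = 0" .
  qed
  then show ?thesis unfolding x_def by simp
qed

lemma inv21_eq: "inv21 C V n = d21_inv n"
  unfolding inv21_def
proof (rule the_equality)
  fix M
  assume M: "(\<forall>s t. M s t \<noteq> 0 \<longrightarrow> s \<in> src C V (n - 1) \<and> t \<in> tgt C V n) \<and>
    (\<forall>t\<in>tgt C V n. \<forall>t'\<in>tgt C V n. (\<Sum>s\<in>src C V (n - 1). bd C n t s * M s t') = delta t t') \<and>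
    (\<forall>s\<in>src C V (n - 1). \<forall>s'\<in>src C V (n - 1). (\<Sum>t\<in>tgt C V n. M s t * bd C n t s') = delta s s')"
  show "M = d21_inv n"
  proof (intro ext)
    fix s t'
    show "M s t' = d21_inv n s t'"
    proof (cases "s \<in> src C V (n - 1) \<and> t' \<in> tgt C V n")
      case True
      have "M s t' - d21_inv n s t' = 0"
      proof (rule d21_kernel_trivial[where x="\<lambda>s. M s t' - d21_inv n s t'"])
        fix t assume "t \<in> tgt C V n"
        then show "(\<Sum>s\<in>src C V (n - 1). bd C n t s * (M s t' - d21_inv n s t')) = 0"
          using M d21_inv_right True by (simp add: algebra_simps sum_subtractf)
      qed (use True in simp)
      then show ?thesis by simp
    next
      case False
      then show ?thesis using M unfolding d21_inv_def by auto
    qed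
  qed
qed (use d21_inv_right d21_inv_left in \<open>auto simp: d21_inv_def split: if_splits\<close>)

lemma inv21_support: "inv21 C V n s t \<noteq> 0 \<Longrightarrow> s \<in> src C V (n - 1) \<and> t \<in> tgt C V n"
  unfolding inv21_eq d21_inv_def by (auto split: if_splits)

lemma inv21_right: "t \<in> tgt C V n \<Longrightarrow> t' \<in> tgt C V n \<Longrightarrow>
    (\<Sum>s\<in>src C V (n - 1). bd C n t s * inv21 C V n s t') = delta t t'"
  unfolding inv21_eq by (rule d21_inv_right)

lemma inv21_left: "s \<in> src C V (n - 1) \<Longrightarrow> s' \<in> src C V (n - 1) \<Longrightarrow>
    (\<Sum>t\<in>tgt C V n. inv21 C V n s t * bd C n t s') = delta s s'"
  unfolding inv21_eq by (rule d21_inv_left)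

definition Cells :: "'a set" where "Cells = (\<Union>n. cells C n)"

abbreviation mult_Cells (infixl "\<odot>" 70) where "A \<odot> B \<equiv> mat_mult Cells A B"

definition cell_deg :: "'a \<Rightarrow> int" where "cell_deg x = (THE n. x \<in> cells C n)"

definition bd_mat :: "'a matrix" where
  "bd_mat x y = (if x \<in> Cells \<and> y \<in> cells C (cell_deg x - 1) then bd C (cell_deg x) x y else 0)"

definition inv_mat :: "'a matrix" where
  "inv_mat x y = (if x \<in> Cells then inv21 C V (cell_deg x + 1) x y else 0)"

definition Tgt :: "'a set" where "Tgt = {t. \<exists>s. (s, t) \<in> V}"

definition Src :: "'a set" where "Src = {s. \<exists>t. (s, t) \<in> V}"

definition Crit :: "'a set" where "Crit = Cells - Tgt - Src"

lemma Cells_finite: "finite Cells"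
  unfolding Cells_def by (rule finite_Cells)

lemma cells_subset_Cells: "cells C n \<subseteq> Cells"
  unfolding Cells_def by blast

lemma cell_deg_eq: "x \<in> cells C n \<Longrightarrow> cell_deg x = n"
  unfolding cell_deg_def using cells_disjoint by blast

lemma cells_cell_deg: "x \<in> Cells \<Longrightarrow> x \<in> cells C (cell_deg x)"
  unfolding Cells_def using cell_deg_eq by auto

lemma Tgt_iff: "x \<in> cells C n \<Longrightarrow> x \<in> Tgt \<longleftrightarrow> x \<in> tgt C V n"
  and Src_iff: "x \<in> cells C n \<Longrightarrow> x \<in> Src \<longleftrightarrow> x \<in> src C V n"
  unfolding Tgt_def Src_def tgt_def src_def by auto

lemma crit_iff: "x \<in> crit C V n \<longleftrightarrow> x \<in> cells C n \<and> x \<in> Crit"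
  unfolding crit_def Crit_def using Tgt_iff Src_iff cells_subset_Cells by blast

lemma bd_mat_eq: "x \<in> cells C n \<Longrightarrow> y \<in> cells C (n - 1) \<Longrightarrow> bd_mat x y = bd C n x y"
  unfolding bd_mat_def using cells_subset_Cells cell_deg_eq by auto

lemma bd_mat_nonzero: "bd_mat x y \<noteq> 0 \<Longrightarrow> x \<in> cells C (cell_deg x) \<and> y \<in> cells C (cell_deg x - 1)"
  unfolding bd_mat_def using cells_cell_deg by (auto split: if_splits)

lemma inv_mat_eq: "x \<in> cells C n \<Longrightarrow> inv_mat x y = inv21 C V (n + 1) x y"
  unfolding inv_mat_def using cells_subset_Cells cell_deg_eq by auto

lemma inv_mat_nonzero:
  "inv_mat x y \<noteq> 0 \<Longrightarrow> x \<in> src C V (cell_deg x) \<and> y \<in> tgt C V (cell_deg x + 1)"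
  unfolding inv_mat_def using inv21_support[of "cell_deg x + 1" x y] by (auto split: if_splits)

lemma inv_mat_Src_Tgt: "inv_mat x y \<noteq> 0 \<Longrightarrow> x \<in> Src \<and> y \<in> Tgt"
  using inv_mat_nonzero Src_iff Tgt_iff unfolding src_def tgt_def by blast

lemma bd_inv_eq:
  assumes "c \<in> cells C n"
  shows "(bd_mat \<odot> inv_mat) c b = (\<Sum>s\<in>src C V (n - 1). bd C n c s * inv21 C V n s b)"
proof (rule mat_mult_eq_sum[OF Cells_finite])
  show "src C V (n - 1) \<subseteq> Cells" unfolding src_def using cells_subset_Cells by blast
  show "y \<in> src C V (n - 1)" if "bd_mat c y * inv_mat y b \<noteq> 0" for y
    using that bd_mat_nonzero[of c y] inv_mat_nonzero[of y b] cell_deg_eq assms by fastforce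
qed (use assms bd_mat_eq inv_mat_eq in \<open>auto simp: src_def\<close>)

lemma inv_bd_eq:
  assumes "a \<in> cells C n" "c \<in> cells C n"
  shows "(inv_mat \<odot> bd_mat) a c = (\<Sum>t\<in>tgt C V (n + 1). inv21 C V (n + 1) a t * bd C (n + 1) t c)"
proof (rule mat_mult_eq_sum[OF Cells_finite])
  show "tgt C V (n + 1) \<subseteq> Cells" unfolding tgt_def using cells_subset_Cells by blast
  show "y \<in> tgt C V (n + 1)" if "inv_mat a y * bd_mat y c \<noteq> 0" for y
    using that inv_mat_nonzero[of a y] cell_deg_eq assms by fastforce
qed (use assms bd_mat_eq inv_mat_eq in \<open>auto simp: tgt_def\<close>)

lemma inv_bd_nonzero:
  assumes "(inv_mat \<odot> bd_mat) a c \<noteq> 0"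
  shows "a \<in> Cells \<and> c \<in> cells C (cell_deg a)"
proof -
  obtain y where ay: "inv_mat a y \<noteq> 0" and yc: "bd_mat y c \<noteq> 0"
    using assms by (rule mat_mult_nonzero)
  have a: "a \<in> cells C (cell_deg a)" and y: "y \<in> cells C (cell_deg a + 1)"
    using inv_mat_nonzero[OF ay] unfolding src_def tgt_def by simp_all
  have "c \<in> cells C (cell_deg y - 1)"
    using bd_mat_nonzero[OF yc] by simp
  then show ?thesis using a cell_deg_eq[OF y] cells_subset_Cells by auto
qed

lemma bd_inv_nonzero:
  assumes "(bd_mat \<odot> inv_mat) c b \<noteq> 0"
  shows "c \<in> Cells \<and> b \<in> cells C (cell_deg c)"
proof -
  obtain y where cy: "bd_mat c y \<noteq> 0" and yb: "inv_mat y b \<noteq> 0"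
    using assms by (rule mat_mult_nonzero)
  have c: "c \<in> cells C (cell_deg c)" and y: "y \<in> cells C (cell_deg c - 1)"
    using bd_mat_nonzero[OF cy] by simp_all
  have "b \<in> cells C (cell_deg y + 1)"
    using inv_mat_nonzero[OF yb] unfolding tgt_def by simp
  then show ?thesis using c cell_deg_eq[OF y] cells_subset_Cells by auto
qed

lemma bd_mat_cells: "bd_mat x y \<noteq> 0 \<Longrightarrow> x \<in> cells C n \<Longrightarrow> y \<in> cells C (n - 1)"
  using bd_mat_nonzero cell_deg_eq by metis

lemma inv_mat_cells: "inv_mat x y \<noteq> 0 \<Longrightarrow> x \<in> cells C n \<Longrightarrow> x \<in> src C V n \<and> y \<in> tgt C V (n + 1)"
  using inv_mat_nonzero cell_deg_eq by metis

lemma Tgt_Src_disjoint: "Tgt \<inter> Src = {}"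
  unfolding Tgt_def Src_def using vector_src_not_tgt by blast

lemma Tgt_subset: "Tgt \<subseteq> Cells" and Src_subset: "Src \<subseteq> Cells"
  unfolding Tgt_def Src_def Cells_def using vector_cells by blast+

lemma Crit_subset: "Crit \<subseteq> Cells"
  unfolding Crit_def by blast

lemma bd_mat_squared: "bd_mat \<odot> bd_mat = 0"
proof (intro ext)
  fix x z
  show "(bd_mat \<odot> bd_mat) x z = 0 x z"
  proof (cases "x \<in> Cells \<and> z \<in> cells C (cell_deg x - 2)")
    case True
    let ?n = "cell_deg x"
    have x: "x \<in> cells C ?n" using True cells_cell_deg by blast
    have "(bd_mat \<odot> bd_mat) x z = (\<Sum>y\<in>cells C (?n - 1). bd C ?n x y * bd C (?n - 1) y z)"
      by (rule mat_mult_eq_sum[OF Cells_finite cells_subset_Cells])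
        (use x True bd_mat_cells bd_mat_eq in \<open>auto simp: diff_diff_eq\<close>)
    then show ?thesis using bd_bd[OF x] True by simp
  next
    case False
    have "bd_mat x y * bd_mat y z = 0" for y
    proof (rule ccontr)
      assume "bd_mat x y * bd_mat y z \<noteq> 0"
      then have xy: "bd_mat x y \<noteq> 0" and yz: "bd_mat y z \<noteq> 0" by auto
      have x: "x \<in> cells C (cell_deg x)" and y: "y \<in> cells C (cell_deg x - 1)"
        using bd_mat_nonzero[OF xy] by auto
      have "z \<in> cells C (cell_deg x - 1 - 1)" using bd_mat_cells[OF yz y] .
      then show False using False x cells_subset_Cells by (auto simp: diff_diff_eq)
    qed
    then show ?thesis by (simp only: mat_mult_def sum.neutral_const zero_fun_def)
  qed
qed

lemma inv_mat_squared: "inv_mat \<odot> inv_mat = 0"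
proof -
  have "inv_mat x y * inv_mat y z = 0" for x y z
    using inv_mat_Src_Tgt[of x y] inv_mat_Src_Tgt[of y z] Tgt_Src_disjoint by auto
  then show ?thesis by (simp only: mat_mult_def sum.neutral_const zero_fun_def)
qed

lemma bd_inv_on_Tgt: "diag_on Tgt \<odot> (bd_mat \<odot> inv_mat) = diag_on Tgt"
proof -
  have "(bd_mat \<odot> inv_mat) x z = diag_on Tgt x z" if "x \<in> Tgt" for x z
  proof -
    let ?n = "cell_deg x"
    have x: "x \<in> tgt C V ?n" "x \<in> cells C ?n"
      using that Tgt_subset Tgt_iff cells_cell_deg by blast+
    show ?thesis
    proof (cases "z \<in> tgt C V ?n")
      case True
      then show ?thesis
        using bd_inv_eq[OF x(2)] inv21_right[OF x(1) True] that Tgt_iff[of z ?n]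
        unfolding delta_def diag_on_def tgt_def by auto
    next
      case False
      then have "inv21 C V ?n s z = 0" for s using inv21_support by blast
      moreover have "x \<noteq> z" using False x by blast
      ultimately show ?thesis using bd_inv_eq[OF x(2)] unfolding diag_on_def by simp
    qed
  qed
  then show ?thesis
    unfolding mat_mult_diag_left[OF Cells_finite Tgt_subset] by (auto simp: fun_eq_iff diag_on_def)
qed

lemma inv_bd_on_Src: "(inv_mat \<odot> bd_mat) \<odot> diag_on Src = diag_on Src"
proof -
  have "(inv_mat \<odot> bd_mat) x z = diag_on Src x z" if "z \<in> Src" for x z
  proof -
    let ?m = "cell_deg z"
    have z: "z \<in> src C V ?m" "z \<in> cells C ?m"
      using that Src_subset Src_iff cells_cell_deg by blast+
    show ?thesis
    proof (cases "x \<in> cells C ?m")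
      case x: True
      show ?thesis
      proof (cases "x \<in> src C V ?m")
        case True
        then show ?thesis
          using inv_bd_eq[OF x z(2)] inv21_left[of x "?m + 1" z] z that Src_iff[OF x]
          unfolding delta_def diag_on_def by auto
      next
        case False
        then have "inv21 C V (?m + 1) x t = 0" for t using inv21_support by fastforce
        then show ?thesis using inv_bd_eq[OF x z(2)] False Src_iff[OF x] unfolding diag_on_def by simp
      qed
    next
      case False
      then have "(inv_mat \<odot> bd_mat) x z = 0"
        using inv_bd_nonzero cells_cell_deg cell_deg_eq z(2) by metis
      moreover have "x \<noteq> z" using False z by blast
      ultimately show ?thesis unfolding diag_on_def by simp
    qed
  qed
  then show ?thesis
    unfolding mat_mult_diag_right[OF Cells_finite Src_subset] by (auto simp: fun_eq_iff diag_on_def)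
qed

lemma inv_mat_crit: "inv_mat \<odot> diag_on Crit = 0"
  and crit_inv_mat: "diag_on Crit \<odot> inv_mat = 0"
  unfolding mat_mult_diag_left[OF Cells_finite Crit_subset] mat_mult_diag_right[OF Cells_finite Crit_subset]
  using inv_mat_Src_Tgt by (auto simp: fun_eq_iff Crit_def)

sublocale contraction: contraction_data Cells bd_mat inv_mat Tgt Src "Crit"
proof
  show "supported_on Cells bd_mat"
    unfolding supported_on_def using bd_mat_nonzero cells_subset_Cells by blast
  show "supported_on Cells inv_mat"
    unfolding supported_on_def using inv_mat_Src_Tgt Tgt_subset Src_subset by blast
  show "Crit = Cells - Tgt - Src" by (rule Crit_def)
qed (simp_all add: Cells_finite Tgt_Src_disjoint Tgt_subset Src_subset bd_mat_squared inv_mat_squared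
       bd_inv_on_Tgt inv_bd_on_Src inv_mat_crit crit_inv_mat)

abbreviation red_f where "red_f \<equiv> fst (vf_red C V)"
abbreviation red_g where "red_g \<equiv> fst (snd (vf_red C V))"
abbreviation red_h where "red_h \<equiv> snd (snd (vf_red C V))"

lemma crit_cells: "c \<in> crit C V n \<Longrightarrow> c \<in> cells C n"
  unfolding crit_def by blast

lemma crit_finite: "finite (crit C V n)"
  unfolding crit_def using cells_finite by simp

lemma diag_Cells_eq_delta: "x \<in> cells C n \<Longrightarrow> diag_on Cells x y = delta x y"
  unfolding diag_on_def delta_def using cells_subset_Cells by auto

lemma inv_mat_red_h: "a \<in> cells C n \<Longrightarrow> inv_mat a b = red_h n a b"
  unfolding vf_red_def using inv_mat_eq inv21_support[of "n + 1" a b] by auto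

lemma f_red_f:
  assumes a: "a \<in> cells C n" and c: "c \<in> crit C V n"
  shows "contraction.f a c = red_f n a c"
proof -
  have c': "c \<in> cells C n" "c \<in> Crit" using c crit_iff by auto
  have "a \<noteq> c" if "a \<in> tgt C V n \<or> a \<in> src C V n" using that c unfolding crit_def by auto
  moreover have "inv21 C V (n + 1) a t = 0" if "a \<notin> src C V n" for t
    using that inv21_support by fastforce
  ultimately show ?thesis
    unfolding contraction.f_apply vf_red_def using c' diag_Cells_eq_delta[OF a] inv_bd_eq[OF a c'(1)]
      src_tgt_disjoint by (auto simp: delta_def)
qed

lemma f_nonzero:
  assumes "contraction.f a c \<noteq> 0"
  shows "a \<in> cells C (cell_deg a) \<and> c \<in> crit C V (cell_deg a)"
proof -
  have c: "c \<in> Crit" and "diag_on Cells a c \<noteq> 0 \<or> (inv_mat \<odot> bd_mat) a c \<noteq> 0"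
    using assms unfolding contraction.f_apply by (auto split: if_splits)
  then have "a \<in> Cells \<and> c \<in> cells C (cell_deg a)"
    using inv_bd_nonzero Crit_subset cells_cell_deg unfolding diag_on_def by (auto split: if_splits)
  then show ?thesis using c cells_cell_deg crit_iff by blast
qed

lemma g_red_g:
  assumes c: "c \<in> crit C V n" and b: "b \<in> cells C n"
  shows "contraction.g c b = red_g n c b"
proof -
  have c': "c \<in> cells C n" "c \<in> Crit" using c crit_iff by auto
  have "c \<noteq> b" if "b \<in> tgt C V n \<or> b \<in> src C V n" using that c unfolding crit_def by auto
  moreover have "inv21 C V n s b = 0" if "b \<notin> tgt C V n" for s
    using that inv21_support by fastforce
  ultimately show ?thesis
    unfolding contraction.g_apply vf_red_def using c' diag_Cells_eq_delta[OF c'(1)] bd_inv_eq[OF c'(1)]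
    by (auto simp: delta_def)
qed

lemma g_nonzero:
  assumes "contraction.g c b \<noteq> 0"
  shows "c \<in> crit C V (cell_deg c) \<and> b \<in> cells C (cell_deg c)"
proof -
  have c: "c \<in> Crit" and "diag_on Cells c b \<noteq> 0 \<or> (bd_mat \<odot> inv_mat) c b \<noteq> 0"
    using assms unfolding contraction.g_apply by (auto split: if_splits)
  then have "c \<in> Cells \<and> b \<in> cells C (cell_deg c)"
    using bd_inv_nonzero Crit_subset cells_cell_deg unfolding diag_on_def by (auto split: if_splits)
  then show ?thesis using c cells_cell_deg crit_iff by blast
qed

lemma d'_bd_crit:
  assumes c: "c \<in> crit C V n" and c': "c' \<in> crit C V (n - 1)"
  shows "contraction.d' c c' = bd (crit_complex C V) n c c'"
proof -
  have cc: "c \<in> cells C n" "c' \<in> cells C (n - 1)" "c \<in> Crit" "c' \<in> Crit"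
    using c c' crit_iff by auto
  have "(bd_mat \<odot> (inv_mat \<odot> bd_mat)) c c' =
      (\<Sum>y\<in>cells C (n - 1). bd C n c y * (\<Sum>t\<in>tgt C V n. inv21 C V n y t * bd C n t c'))"
    by (rule mat_mult_eq_sum[OF Cells_finite cells_subset_Cells])
      (use cc bd_mat_cells bd_mat_eq inv_bd_eq[of _ "n - 1" c'] in auto)
  also have "\<dots> = (\<Sum>s\<in>src C V (n - 1). bd C n c s * (\<Sum>t\<in>tgt C V n. inv21 C V n s t * bd C n t c'))"
    using inv21_support
    by (intro sum.mono_neutral_right) (auto simp: cells_finite src_def intro!: sum.neutral)
  also have "\<dots> = (\<Sum>s\<in>src C V (n - 1). \<Sum>t\<in>tgt C V n. bd C n c s * inv21 C V n s t * bd C n t c')"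
    by (simp add: sum_distrib_left mult.assoc)
  finally show ?thesis
    unfolding contraction.d'_apply crit_complex_def using cc bd_mat_eq by simp
qed

lemma d'_nonzero:
  assumes "contraction.d' c c' \<noteq> 0"
  shows "c \<in> crit C V (cell_deg c) \<and> c' \<in> crit C V (cell_deg c - 1)"
proof -
  have K: "c \<in> Crit" "c' \<in> Crit"
    and nz: "bd_mat c c' \<noteq> 0 \<or> (bd_mat \<odot> (inv_mat \<odot> bd_mat)) c c' \<noteq> 0"
    using assms unfolding contraction.d'_apply by (auto split: if_splits)
  have "c' \<in> cells C (cell_deg c - 1)"
    using nz
  proof
    assume "(bd_mat \<odot> (inv_mat \<odot> bd_mat)) c c' \<noteq> 0"
    then obtain y where cy: "bd_mat c y \<noteq> 0" and yc: "(inv_mat \<odot> bd_mat) y c' \<noteq> 0"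
      by (rule mat_mult_nonzero)
    have y: "y \<in> cells C (cell_deg c - 1)" using bd_mat_nonzero[OF cy] by simp
    then show ?thesis using inv_bd_nonzero[OF yc] cell_deg_eq[OF y] by simp
  qed (use bd_mat_nonzero in blast)
  moreover have "c \<in> cells C (cell_deg c)" using K Crit_subset cells_cell_deg by blast
  ultimately show ?thesis using K crit_iff by blast
qed

lemma cells_crit_complex [simp]: "cells (crit_complex C V) = crit C V"
  unfolding crit_complex_def by simp

lemma filt_crit_complex [simp]: "filt (crit_complex C V) i n = filt C i n \<inter> crit C V n"
  and flen_crit_complex [simp]: "flen (crit_complex C V) = flen C"
  unfolding crit_complex_def by simp_all

lemma crit_subset_Cells: "crit C V n \<subseteq> Cells"
  using crit_cells cells_subset_Cells by blast

lemma red_f_chain_map: "is_chain_map C (crit_complex C V) red_f"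
  unfolding is_chain_map_def cells_crit_complex
proof (intro allI ballI)
  fix n a c assume a: "a \<in> cells C n" and c: "c \<in> crit C V (n - 1)"
  have "(contraction.f \<odot> contraction.d') a c =
      (\<Sum>b\<in>crit C V n. red_f n a b * bd (crit_complex C V) n b c)"
  proof (rule mat_mult_eq_sum[OF Cells_finite crit_subset_Cells])
    show "y \<in> crit C V n" if "contraction.f a y * contraction.d' y c \<noteq> 0" for y
      using that f_nonzero[of a y] cell_deg_eq[OF a] by auto
  qed (use a c f_red_f d'_bd_crit in auto)
  moreover have "(bd_mat \<odot> contraction.f) a c =
      (\<Sum>a'\<in>cells C (n - 1). bd C n a a' * red_f (n - 1) a' c)"
  proof (rule mat_mult_eq_sum[OF Cells_finite cells_subset_Cells])
    show "y \<in> cells C (n - 1)" if "bd_mat a y * contraction.f y c \<noteq> 0" for y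
      using that bd_mat_cells[OF _ a] by auto
  qed (use a c bd_mat_eq f_red_f in auto)
  ultimately show "(\<Sum>b\<in>crit C V n. red_f n a b * bd (crit_complex C V) n b c) =
      (\<Sum>a'\<in>cells C (n - 1). bd C n a a' * red_f (n - 1) a' c)"
    using contraction.f_d' by metis
qed

lemma red_g_chain_map: "is_chain_map (crit_complex C V) C red_g"
  unfolding is_chain_map_def cells_crit_complex
proof (intro allI ballI)
  fix n c a assume c: "c \<in> crit C V n" and a: "a \<in> cells C (n - 1)"
  have c_deg: "cell_deg c = n" using cell_deg_eq[OF crit_cells[OF c]] .
  have "(contraction.g \<odot> bd_mat) c a = (\<Sum>b\<in>cells C n. red_g n c b * bd C n b a)"
  proof (rule mat_mult_eq_sum[OF Cells_finite cells_subset_Cells])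
    show "y \<in> cells C n" if "contraction.g c y * bd_mat y a \<noteq> 0" for y
      using that g_nonzero[of c y] c_deg by auto
  qed (use a c g_red_g bd_mat_eq in auto)
  moreover have "(contraction.d' \<odot> contraction.g) c a =
      (\<Sum>c'\<in>crit C V (n - 1). bd (crit_complex C V) n c c' * red_g (n - 1) c' a)"
  proof (rule mat_mult_eq_sum[OF Cells_finite crit_subset_Cells])
    show "y \<in> crit C V (n - 1)" if "contraction.d' c y * contraction.g y a \<noteq> 0" for y
      using that d'_nonzero[of c y] c_deg by auto
  qed (use a c g_red_g d'_bd_crit in auto)
  ultimately show "(\<Sum>b\<in>cells C n. red_g n c b * bd C n b a) =
      (\<Sum>c'\<in>crit C V (n - 1). bd (crit_complex C V) n c c' * red_g (n - 1) c' a)"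
    using contraction.d'_g by metis
qed

lemma red_g_red_f:
  assumes b: "b \<in> crit C V n" and b': "b' \<in> crit C V n"
  shows "(\<Sum>a\<in>cells C n. red_g n b a * red_f n a b') = delta b b'"
proof -
  have b_deg: "cell_deg b = n" using cell_deg_eq[OF crit_cells[OF b]] .
  have "(contraction.g \<odot> contraction.f) b b' = (\<Sum>a\<in>cells C n. red_g n b a * red_f n a b')"
  proof (rule mat_mult_eq_sum[OF Cells_finite cells_subset_Cells])
    show "y \<in> cells C n" if "contraction.g b y * contraction.f y b' \<noteq> 0" for y
      using that g_nonzero[of b y] b_deg by auto
  qed (use b b' g_red_g f_red_f in auto)
  moreover have "diag_on Crit b b' = delta b b'"
    using b b' crit_iff unfolding diag_on_def delta_def by auto
  ultimately show ?thesis using contraction.gf by simp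
qed

lemma red_homotopy:
  assumes a: "a \<in> cells C n" and a': "a' \<in> cells C n"
  shows "(\<Sum>b\<in>crit C V n. red_f n a b * red_g n b a') +
      (\<Sum>x\<in>cells C (n + 1). red_h n a x * bd C (n + 1) x a') +
      (\<Sum>y\<in>cells C (n - 1). bd C n a y * red_h (n - 1) y a') = delta a a'"
proof -
  have "(contraction.f \<odot> contraction.g) a a' = (\<Sum>b\<in>crit C V n. red_f n a b * red_g n b a')"
  proof (rule mat_mult_eq_sum[OF Cells_finite crit_subset_Cells])
    show "y \<in> crit C V n" if "contraction.f a y * contraction.g y a' \<noteq> 0" for y
      using that f_nonzero[of a y] cell_deg_eq[OF a] by auto
  qed (use a a' f_red_f g_red_g in auto)
  moreover have "(inv_mat \<odot> bd_mat) a a' = (\<Sum>x\<in>cells C (n + 1). red_h n a x * bd C (n + 1) x a')"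
  proof (rule mat_mult_eq_sum[OF Cells_finite cells_subset_Cells])
    show "y \<in> cells C (n + 1)" if "inv_mat a y * bd_mat y a' \<noteq> 0" for y
      using that inv_mat_cells[OF _ a] unfolding tgt_def by auto
  qed (use a a' inv_mat_red_h bd_mat_eq in auto)
  moreover have "(bd_mat \<odot> inv_mat) a a' = (\<Sum>y\<in>cells C (n - 1). bd C n a y * red_h (n - 1) y a')"
  proof (rule mat_mult_eq_sum[OF Cells_finite cells_subset_Cells])
    show "y \<in> cells C (n - 1)" if "bd_mat a y * inv_mat y a' \<noteq> 0" for y
      using that bd_mat_cells[OF _ a] by auto
  qed (use a inv_mat_red_h bd_mat_eq in auto)
  ultimately show ?thesis
    using fun_cong[OF fun_cong[OF contraction.fg_homotopy, of a], of a'] diag_Cells_eq_delta[OF a] by simp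
qed

lemma red_h_red_f:
  assumes a: "a \<in> cells C n" and b: "b \<in> crit C V (n + 1)"
  shows "(\<Sum>x\<in>cells C (n + 1). red_h n a x * red_f (n + 1) x b) = 0"
proof -
  have "(inv_mat \<odot> contraction.f) a b = (\<Sum>x\<in>cells C (n + 1). red_h n a x * red_f (n + 1) x b)"
  proof (rule mat_mult_eq_sum[OF Cells_finite cells_subset_Cells])
    show "y \<in> cells C (n + 1)" if "inv_mat a y * contraction.f y b \<noteq> 0" for y
      using that inv_mat_cells[OF _ a] unfolding tgt_def by auto
  qed (use a b inv_mat_red_h f_red_f in auto)
  then show ?thesis using contraction.hf by simp
qed

lemma red_g_red_h:
  assumes b: "b \<in> crit C V n" and a: "a \<in> cells C (n + 1)"
  shows "(\<Sum>x\<in>cells C n. red_g n b x * red_h n x a) = 0"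
proof -
  have "(contraction.g \<odot> inv_mat) b a = (\<Sum>x\<in>cells C n. red_g n b x * red_h n x a)"
  proof (rule mat_mult_eq_sum[OF Cells_finite cells_subset_Cells])
    show "y \<in> cells C n" if "contraction.g b y * inv_mat y a \<noteq> 0" for y
      using that g_nonzero[of b y] cell_deg_eq[OF crit_cells[OF b]] by auto
  qed (use b g_red_g inv_mat_red_h in auto)
  then show ?thesis using contraction.gh by simp
qed

lemma red_h_red_h:
  assumes a: "a \<in> cells C n" and a': "a' \<in> cells C (n + 2)"
  shows "(\<Sum>x\<in>cells C (n + 1). red_h n a x * red_h (n + 1) x a') = 0"
proof -
  have "(inv_mat \<odot> inv_mat) a a' = (\<Sum>x\<in>cells C (n + 1). red_h n a x * red_h (n + 1) x a')"
  proof (rule mat_mult_eq_sum[OF Cells_finite cells_subset_Cells])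
    show "y \<in> cells C (n + 1)" if "inv_mat a y * inv_mat y a' \<noteq> 0" for y
      using that inv_mat_cells[OF _ a] unfolding tgt_def by auto
  qed (use a inv_mat_red_h in auto)
  then show ?thesis using contraction.hh by simp
qed

theorem vf_red_is_reduction: "is_reduction C (crit_complex C V) red_f red_g red_h"
  unfolding is_reduction_def
  using red_f_chain_map red_g_chain_map red_g_red_f red_homotopy red_h_red_f red_g_red_h red_h_red_h
  by simp

lemma crit_bd_bd:
  assumes c: "c \<in> crit C V n" and c'': "c'' \<in> crit C V (n - 2)"
  shows "(\<Sum>b\<in>crit C V (n - 1). bd (crit_complex C V) n c b * bd (crit_complex C V) (n - 1) b c'') = 0"
proof -
  have "(contraction.d' \<odot> contraction.d') c c'' =
      (\<Sum>b\<in>crit C V (n - 1). bd (crit_complex C V) n c b * bd (crit_complex C V) (n - 1) b c'')"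
  proof (rule mat_mult_eq_sum[OF Cells_finite crit_subset_Cells])
    show "y \<in> crit C V (n - 1)" if "contraction.d' c y * contraction.d' y c'' \<noteq> 0" for y
      using that d'_nonzero[of c y] cell_deg_eq[OF crit_cells[OF c]] by auto
  next
    fix y assume "y \<in> crit C V (n - 1)"
    moreover have "c'' \<in> crit C V (n - 1 - 1)" using c'' by (simp add: diff_diff_eq)
    ultimately show "contraction.d' y c'' = bd (crit_complex C V) (n - 1) y c''"
      by (rule d'_bd_crit)
  qed (use c d'_bd_crit in auto)
  then show ?thesis using contraction.d'd' by simp
qed

subsection \<open>Filtrations\<close>

lemma filt_subset: "filt C i n \<subseteq> cells C n"
  using complex unfolding is_filtered_complex_def by blast

lemma filt_bd: "t \<in> filt C i n \<Longrightarrow> s \<in> cells C (n - 1) \<Longrightarrow> bd C n t s \<noteq> 0 \<Longrightarrow> s \<in> filt C i (n - 1)"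
  using complex unfolding is_filtered_complex_def by blast

lemma filt_mono: "i \<le> j \<Longrightarrow> filt C i n \<subseteq> filt C j n"
proof -
  have "mono (\<lambda>i. filt C i n)"
    using complex unfolding is_filtered_complex_def by (intro mono_iff_le_Suc[THEN iffD2]) simp
  then show "i \<le> j \<Longrightarrow> filt C i n \<subseteq> filt C j n" by (simp add: mono_def)
qed

lemma filt_iff_fidx:
  assumes "x \<in> cells C n"
  shows "x \<in> filt C i n \<longleftrightarrow> fidx C x \<le> i"
proof -
  have "(\<exists>m. x \<in> filt C i m) \<longleftrightarrow> x \<in> filt C i n" for i
    using assms filt_subset cells_disjoint by blast
  then have fidx: "fidx C x = (LEAST i. x \<in> filt C i n)"
    unfolding fidx_def by simp
  have "x \<in> filt C (flen C) n"
    using assms complex unfolding is_filtered_complex_def by blast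
  then have "x \<in> filt C (fidx C x) n" unfolding fidx by (rule LeastI)
  then show ?thesis unfolding fidx using filt_mono by (blast intro: Least_le)
qed

end

locale filtered_dvf_complex = finite_dvf_complex +
  assumes fidx_vector: "(s, t) \<in> V \<Longrightarrow> fidx C s = fidx C t"
begin

lemma target_of_filt:
  assumes s: "s \<in> src C V (n - 1)" and sf: "s \<in> filt C i (n - 1)"
  shows "target_of s \<in> filt C i n"
proof -
  have "s \<in> cells C (n - 1)" "target_of s \<in> cells C n"
    using s src_vector(2)[OF s] unfolding src_def tgt_def by auto
  then show ?thesis
    using sf fidx_vector[OF src_vector(1)[OF s]] filt_iff_fidx by metis
qed

lemma inv21_filt:
  assumes "inv21 C V n s t \<noteq> 0" and "s \<in> filt C i (n - 1)"
  shows "t \<in> filt C i n"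
proof -
  have "s \<in> src C V (n - 1)" and "inv21_rec n s t \<noteq> 0"
    using assms(1) unfolding inv21_eq d21_inv_def by (auto split: if_splits)
  then show ?thesis
    using assms(2)
  proof (induction s arbitrary: t rule: wf_induct[OF wf_src_face[of n]])
    case (1 s)
    have tf: "target_of s \<in> filt C i n" using target_of_filt 1(2,4) .
    show ?case
    proof (cases "target_of s = t")
      case False
      then have "(\<Sum>s'\<in>src C V (n - 1) - {s}. bd C n (target_of s) s' * inv21_rec n s' t) \<noteq> 0"
        using 1(3) inv21_rec_eq[OF 1(2), of t] by (auto simp: delta_def)
      then obtain s' where s': "s' \<in> src C V (n - 1) - {s}"
        and nz: "bd C n (target_of s) s' \<noteq> 0" "inv21_rec n s' t \<noteq> 0"
        by (metis (no_types, lifting) mult_eq_0_iff sum.neutral)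
      have "(s', s) \<in> src_face n" using s' nz 1(2) unfolding src_face_def by auto
      moreover have "s' \<in> filt C i (n - 1)"
        using filt_bd[OF tf] s' nz unfolding src_def by auto
      ultimately show ?thesis using 1(1) s' nz by auto
    qed (use tf in simp)
  qed
qed

lemma crit_bd_filt:
  assumes t: "t \<in> filt C i n" and s: "s \<in> crit C V (n - 1)"
    and nz: "bd (crit_complex C V) n t s \<noteq> 0"
  shows "s \<in> filt C i (n - 1)"
proof (cases "bd C n t s = 0")
  case True
  then have "(\<Sum>s'\<in>src C V (n - 1). \<Sum>t'\<in>tgt C V n. bd C n t s' * inv21 C V n s' t' * bd C n t' s) \<noteq> 0"
    using nz unfolding crit_complex_def by simp
  then obtain s' t' where s': "s' \<in> src C V (n - 1)" and t': "t' \<in> tgt C V n"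
    and prod: "bd C n t s' * inv21 C V n s' t' * bd C n t' s \<noteq> 0"
    by (meson sum.neutral)
  have "s' \<in> filt C i (n - 1)" using filt_bd[OF t] s' prod unfolding src_def by auto
  then have "t' \<in> filt C i n" using inv21_filt prod by auto
  then show ?thesis using filt_bd s crit_cells prod by auto
qed (use filt_bd t s crit_cells in auto)

theorem crit_complex_is_filtered_complex: "is_filtered_complex (crit_complex C V)"
  unfolding is_filtered_complex_def cells_crit_complex filt_crit_complex flen_crit_complex
proof (intro conjI allI ballI impI)
  show "finite (crit C V n)" for n
    by (rule crit_finite)
  show "crit C V n \<inter> crit C V n' = {}" if "n \<noteq> n'" for n n'
    using that cells_disjoint crit_cells by blast
  fix i n
  have "filt C i n \<subseteq> filt C (Suc i) n" "filt C 0 n = {}" "filt C (flen C) n = cells C n"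
    using complex unfolding is_filtered_complex_def by blast+
  then show "filt C i n \<inter> crit C V n \<subseteq> filt C (Suc i) n \<inter> crit C V n"
    "filt C 0 n \<inter> crit C V n = {}" "filt C (flen C) n \<inter> crit C V n = crit C V n"
    using crit_cells by blast+
qed (use crit_bd_bd crit_bd_filt in blast)+

lemma red_h_filtered: "is_filtered_map C C 1 red_h"
  unfolding is_filtered_map_def
proof (intro allI impI)
  fix i n a b assume a: "a \<in> filt C i n" and nz: "red_h n a b \<noteq> 0"
  then have "inv21 C V (n + 1) a b \<noteq> 0" unfolding vf_red_def by (simp split: if_splits)
  then show "b \<in> filt C i (n + 1)" using inv21_filt[of "n + 1" a b i] a by simp
qed

lemma red_f_filtered: "is_filtered_map C (crit_complex C V) 0 red_f"
  unfolding is_filtered_map_def cells_crit_complex filt_crit_complex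
proof (intro allI impI)
  fix i n a c assume a: "a \<in> filt C i n" and c: "c \<in> crit C V (n + 0)" and nz: "red_f n a c \<noteq> 0"
  have "c \<in> filt C i n"
  proof (cases "a \<in> src C V n")
    case True
    then have "(\<Sum>t\<in>tgt C V (n + 1). inv21 C V (n + 1) a t * bd C (n + 1) t c) \<noteq> 0"
      using nz src_tgt_disjoint unfolding vf_red_def by auto
    then obtain t where t: "t \<in> tgt C V (n + 1)" and prod: "inv21 C V (n + 1) a t * bd C (n + 1) t c \<noteq> 0"
      by (meson sum.neutral)
    have "t \<in> filt C i (n + 1)" using inv21_filt[of "n + 1" a t] a prod by simp
    then show ?thesis using filt_bd[of t i "n + 1" c] c crit_cells prod by simp
  next
    case False
    then show ?thesis using nz a unfolding vf_red_def by (auto simp: delta_def split: if_splits)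
  qed
  then show "c \<in> filt C i (n + 0) \<inter> crit C V (n + 0)" using c by simp
qed

lemma red_g_filtered: "is_filtered_map (crit_complex C V) C 0 red_g"
  unfolding is_filtered_map_def cells_crit_complex filt_crit_complex
proof (intro allI impI)
  fix i n c b assume c: "c \<in> filt C i n \<inter> crit C V n" and nz: "red_g n c b \<noteq> 0"
  show "b \<in> filt C i (n + 0)"
  proof (cases "b \<in> tgt C V n")
    case True
    then have "(\<Sum>s\<in>src C V (n - 1). bd C n c s * inv21 C V n s b) \<noteq> 0"
      using nz unfolding vf_red_def by simp
    then obtain s where s: "s \<in> src C V (n - 1)" and prod: "bd C n c s * inv21 C V n s b \<noteq> 0"
      by (meson sum.neutral)
    have "s \<in> filt C i (n - 1)" using filt_bd[of c i n s] c s prod unfolding src_def by auto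
    then show ?thesis using inv21_filt prod by auto
  next
    case False
    then show ?thesis using nz c unfolding vf_red_def by (auto simp: delta_def split: if_splits)
  qed
qed

theorem iter_red_single:
  "case iter_red C [V] of (EC, f, g, h) \<Rightarrow>
     is_filtered_complex EC \<and> is_reduction C EC f g h \<and>
     is_filtered_map C EC 0 f \<and> is_filtered_map EC C 0 g \<and> is_filtered_map C C 1 h"
proof -
  have "iter_red C [V] = (crit_complex C V, comp_red (crit_complex C V) (vf_red C V) id_red)"
    by (simp add: Let_def)
  then have "iter_red C [V] = (crit_complex C V,
      (\<lambda>n a c. if c \<in> crit C V n then red_f n a c else 0),
      (\<lambda>n c b. if c \<in> crit C V n then red_g n c b else 0), red_h)"
    using comp_red_id_red[of "crit_complex C V" red_f red_g red_h] crit_finite by simp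
  moreover have "is_filtered_map C (crit_complex C V) 0 (\<lambda>n a c. if c \<in> crit C V n then red_f n a c else 0)"
    by (rule is_filtered_map_smaller_support[OF red_f_filtered]) (simp split: if_splits)
  moreover have "is_filtered_map (crit_complex C V) C 0 (\<lambda>n c b. if c \<in> crit C V n then red_g n c b else 0)"
    by (rule is_filtered_map_smaller_support[OF red_g_filtered]) (simp split: if_splits)
  ultimately show ?thesis
    using crit_complex_is_filtered_complex is_reduction_restrict[OF vf_red_is_reduction] red_h_filtered
    by simp
qed

end

section \<open>Existence of maximal filtered vector fields\<close>

lemma digital_image_finite_cells:
  assumes "is_filtered_digital_image C"
  shows "finite (\<Union>n. cells C n)"
proof -
  obtain N :: int where N: "\<And>n. n < 0 \<or> n > N \<Longrightarrow> cells C n = {}"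
    using assms unfolding is_filtered_digital_image_def by blast
  have "cells C n \<subseteq> (\<Union>m\<in>{0..N}. cells C m)" for n
    by (cases "n \<in> {0..N}") (use N in auto)
  then have "(\<Union>n. cells C n) \<subseteq> (\<Union>m\<in>{0..N}. cells C m)" by blast
  moreover have "finite (cells C n)" for n
    using assms unfolding is_filtered_digital_image_def is_filtered_complex_def by simp
  ultimately show ?thesis by (simp add: finite_subset)
qed

lemma maximal_filt_dvf_exists:
  assumes "finite (\<Union>n. cells C n)"
  obtains V where "is_maximal_filt_dvf C V"
proof -
  let ?Y = "\<Union>n. cells C n"
  define F where "F = {V. V \<subseteq> ?Y \<times> ?Y \<and> is_filt_dvf C V \<and> is_admissible C V}"
  have "finite F"
    unfolding F_def by (rule finite_subset[of _ "Pow (?Y \<times> ?Y)"]) (use assms in auto)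
  moreover have "{} \<in> F"
    unfolding F_def is_filt_dvf_def is_dvf_def is_admissible_def is_vpath_def by auto
  ultimately obtain V where V: "V \<in> F" and V_max: "\<And>W. W \<in> F \<Longrightarrow> V \<subseteq> W \<Longrightarrow> W = V"
    using finite_has_maximal by (metis empty_iff)
  have "is_maximal_filt_dvf C V"
    unfolding is_maximal_filt_dvf_def
  proof (intro conjI notI)
    show "is_filt_dvf C V" "is_admissible C V" using V unfolding F_def by auto
  next
    assume "\<exists>s t. (s, t) \<notin> V \<and> is_filt_dvf C (insert (s, t) V) \<and> is_admissible C (insert (s, t) V)"
    then obtain s t where st: "(s, t) \<notin> V" "is_filt_dvf C (insert (s, t) V)"
      "is_admissible C (insert (s, t) V)"
      by blast
    have "s \<in> ?Y" "t \<in> ?Y" using st(2) unfolding is_filt_dvf_def is_dvf_def by fastforce+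
    then have "insert (s, t) V \<in> F" using st V unfolding F_def by auto
    then show False using V_max st(1) by blast
  qed
  then show ?thesis by (rule that)
qed

theorem theorem6:
  fixes C :: "'a fcx"
  assumes "is_filtered_digital_image C"
  shows "\<exists>Vs. Vs \<noteq> [] \<and> valid_seq C Vs \<and>
    (case iter_red C Vs of (EC, (f, g, h)) \<Rightarrow>
       is_filtered_complex EC \<and> is_reduction C EC f g h \<and>
       is_filtered_map C EC 0 f \<and> is_filtered_map EC C 0 g \<and> is_filtered_map C C 1 h)"
proof -
  have complex: "is_filtered_complex C" and finite: "finite (\<Union>n. cells C n)"
    using assms digital_image_finite_cells unfolding is_filtered_digital_image_def by auto
  obtain V where V: "is_maximal_filt_dvf C V"
    using maximal_filt_dvf_exists[OF finite] .
  interpret filtered_dvf_complex C V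
  proof unfold_locales
    show "is_dvf C V" "is_admissible C V"
      using V unfolding is_maximal_filt_dvf_def is_filt_dvf_def by simp_all
    show "fidx C s = fidx C t" if "(s, t) \<in> V" for s t
      using V that unfolding is_maximal_filt_dvf_def is_filt_dvf_def by blast
  qed (fact complex finite)+
  show ?thesis
  proof (intro exI[of _ "[V]"] conjI)
    show "valid_seq C [V]" using V by (simp add: is_maximal_filt_dvf_def)
  qed (simp, fact iter_red_single)
qed

end
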